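(* Let $K\ge 2$ users be served by a base-station with a uniform planar array of $M=M_xM_y$ antennas ($M_x$ antennas along the $x$-axis with spacing $d_x$, $M_y$ along the $y$-axis with spacing $d_y$), at wavelength $\lambda$. For an angle pair $\boldsymbol{\theta}=(\theta_x,\theta_y)$ let $\mathbf{a}(\boldsymbol{\theta})\in\mathbb{C}^{M}$ be the vector with entries $$[\mathbf{a}(\boldsymbol\theta)]_{(m_x,m_y)}=e^{j\frac{2\pi}{\lambda}\left(d_x m_x\sin\theta_x+d_y m_y\sin\theta_y\right)},\quad m_x=0,\dots,M_x-1,\ m_y=0,\dots,M_y-1.$$ The channel of user $k$ is $\mathbf{h}_k=\sum_{l=1}^{L}\beta_{k,l}e^{j\phi_{k,l}}\mathbf{a}(\boldsymbol\theta_{k,l})$, where the path gains $\beta_{k,l}$ are constants, the path phases $\phi_{k,l}$ are i.i.d. uniform on $[0,2\pi]$ and independent of all path angles. Fix two users $k\neq k'$, and assume that for every pair of paths $(l,l')$, $\sin\theta_{x,k,l}-\sin\theta_{x,k',l'}$ is uniformly distributed on $[-\alpha_{x,l,l'},\alpha_{x,l,l'}]$ and $\sin\theta_{y,k,l}-\sin\theta_{y,k',l'}$ is uniformly distributed on $[-\alpha_{y,l,l'},\alpha_{y,l,l'}]$, independently of the former, with $\alpha_{x,l,l'},\alpha_{y,l,l'}\in[0,1]$. Then $$\operatorname{Var}\left[\frac{1}{M}\mathbf{h}_k^H\mathbf{h}_{k'}\right]=\sum_{l=1}^{L}\sum_{l'=1}^{L}\left(\beta_{k,l}\beta_{k',l'}\right)^2\,\eta\!\left(\frac{d_x\alpha_{x,l,l'}}{\lambda},M_x\right)\eta\!\left(\frac{d_y\alpha_{y,l,l'}}{\lambda},M_y\right),$$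 where $\eta(c,N)=\frac{1}{N^2}\sum_{m_1=0}^{N-1}\sum_{m_2=0}^{N-1}\operatorname{sinc}\left(2\pi c(m_1-m_2)\right)$.
   Context: $\operatorname{sinc}(x)=\sin(x)/x$ for $x\neq 0$ and $\operatorname{sinc}(0)=1$. For a complex random variable $Z$, $\operatorname{Var}[Z]=\mathbb{E}|Z|^2-|\mathbb{E}Z|^2$. $(\cdot)^H$ denotes conjugate transpose. A uniform distribution on $[-0,0]$ means the corresponding difference is $0$ almost surely. *)

theory Defs
  imports "HOL-Probability.Probability"
begin

text \<open>sinc(x) = sin x / x for x ~= 0, sinc 0 = 1 (abbreviation from HOL-Probability.Sinc_Integral).\<close>

definition cvar :: "'a measure \<Rightarrow> ('a \<Rightarrow> complex) \<Rightarrow> real" where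
  "cvar M Z = (\<integral>\<omega>. (cmod (Z \<omega>))\<^sup>2 \<partial>M) - (cmod (\<integral>\<omega>. Z \<omega> \<partial>M))\<^sup>2"

definition sym_uniform :: "'a measure \<Rightarrow> ('a \<Rightarrow> real) \<Rightarrow> real \<Rightarrow> bool" where
  "sym_uniform M X a \<longleftrightarrow>
     distr M lborel X = (if a = 0 then return lborel 0 else uniform_measure lborel {-a..a})"

definition steer :: "real \<Rightarrow> real \<Rightarrow> real \<Rightarrow> real \<Rightarrow> real \<Rightarrow> nat \<times> nat \<Rightarrow> complex" where
  "steer lam dx dy tx ty m =
     exp (\<i> * complex_of_real (2 * pi / lam * (dx * real (fst m) * sin tx + dy * real (snd m) * sin ty)))"

definition eta :: "real \<Rightarrow> nat \<Rightarrow> real" where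
  "eta c N = (1 / (real N)\<^sup>2) *
     (\<Sum>m1<N. \<Sum>m2<N. sinc (2 * pi * c * (real m1 - real m2)))"

end

theory Submission
  imports Defs
begin

text \<open>Expanding both channels, the normalised inner product is a sum over path pairs \<open>(l, l')\<close>
  of the gain product, the phase factor \<open>exp (j (\<phi>\<^sub>k\<^sub>'\<^sub>,\<^sub>l\<^sub>' - \<phi>\<^sub>k\<^sub>,\<^sub>l))\<close> and the inner
  product of two steering vectors; the latter factorises into two one-dimensional array factors
  evaluated at the differences of the sines of the angles. Because \<open>k \<noteq> k'\<close>, the phase factors
  have mean zero and are orthonormal across distinct path pairs, and they are independent of the
  angles; so the mean vanishes and the second moment is the sum over path pairs of the squared gains
  times the mean squared modulus of the array factors. The characteristic function of the uniform
  distribution on \<open>[-\<alpha>, \<alpha>]\<close> is \<open>t \<mapsto> sinc (t \<alpha>)\<close>, which turns the mean squared modulus of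
  the \<open>N\<close>-element array factor into \<open>N\<^sup>2 \<eta>(c \<alpha>, N)\<close>, and the independence of the horizontal and
  vertical differences multiplies the two factors.\<close>

lemma integral_uniform_measure_Icc:
  fixes f :: "real \<Rightarrow> 'b::{banach, second_countable_topology}"
  assumes "a < b" and [measurable]: "f \<in> borel_measurable borel"
  shows "integral\<^sup>L (uniform_measure lborel {a..b}) f
       = (\<integral>x. indicator {a..b} x *\<^sub>R f x \<partial>lborel) /\<^sub>R (b - a)"
proof -
  have "indicator {a..b} x / emeasure lborel {a..b} = ennreal (inverse (b - a) * indicator {a..b} x)" for x
    using \<open>a < b\<close> divide_ennreal[of 1 "b - a"] by (cases "x \<in> {a..b}") (auto simp: divide_inverse)
  then have "integral\<^sup>L (uniform_measure lborel {a..b}) f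
      = (\<integral>x. inverse (b - a) *\<^sub>R (indicator {a..b} x *\<^sub>R f x) \<partial>lborel)"
    unfolding uniform_measure_def using \<open>a < b\<close> by (simp add: integral_density)
  then show ?thesis
    by (simp only: integral_scaleR_right divide_inverse_commute)
qed

lemma borel_measurable_cis [measurable]: "cis \<in> borel_measurable borel"
  by (intro borel_measurable_continuous_onI continuous_intros)

lemma borel_measurable_cnj [measurable]: "cnj \<in> borel_measurable borel"
  by (intro borel_measurable_continuous_onI continuous_intros)

lemma integral_indicator_cis_Icc:
  assumes "c \<noteq> 0" and "a \<le> b"
  shows "(\<integral>x. indicator {a..b} x *\<^sub>R cis (c * x) \<partial>lborel) = (cis (c * b) - cis (c * a)) / (\<i> * c)"
proof -
  have "((\<lambda>x. cis (c * x) / (\<i> * c)) has_vector_derivative cis (c * x)) (at x within {a..b})" for x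
    using \<open>c \<noteq> 0\<close> unfolding has_vector_derivative_def
    by (auto intro!: derivative_eq_intros ext simp: scaleR_conv_of_real field_simps)
  then show ?thesis
    by (subst integral_FTC_atLeastAtMost[OF \<open>a \<le> b\<close>]) (auto intro!: continuous_intros simp: diff_divide_distrib)
qed

lemma integral_uniform_measure_period_cis_int:
  "integral\<^sup>L (uniform_measure lborel {0..2*pi}) (\<lambda>x. cis (of_int n * x)) = of_bool (n = 0)"
proof (cases "n = 0")
  case False
  have "cis (of_int n * (2 * pi)) = 1"
    using cos_int_2pin[of n] sin_int_2pin[of n] by (simp add: complex_eq_iff mult.commute)
  with False show ?thesis
    by (subst integral_uniform_measure_Icc) (auto simp: integral_indicator_cis_Icc)
qed (simp add: integral_uniform_measure_Icc)

lemma integral_uniform_measure_symmetric_cis: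
  assumes "a > 0"
  shows "integral\<^sup>L (uniform_measure lborel {-a..a}) (\<lambda>x. cis (t * x)) = sinc (t * a)"
proof (cases "t = 0")
  case False
  have "integral\<^sup>L (uniform_measure lborel {-a..a}) (\<lambda>x. cis (t * x))
      = ((cis (t * a) - cis (t * - a)) / (\<i> * t)) /\<^sub>R (a - - a)"
    using False \<open>a > 0\<close> by (subst integral_uniform_measure_Icc) (auto simp: integral_indicator_cis_Icc)
  also have "cis (t * a) - cis (t * - a) = 2 * \<i> * sin (t * a)"
    by (simp add: complex_eq_iff)
  finally show ?thesis
    using False \<open>a > 0\<close> by (simp add: scaleR_conv_of_real field_simps)
qed (use \<open>a > 0\<close> in \<open>simp add: integral_uniform_measure_Icc\<close>)

lemma cis_sum: "cis (\<Sum>i\<in>I. f i) = (\<Prod>i\<in>I. cis (f i))"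
  by (induction I rule: infinite_finite_induct) (auto simp flip: cis_mult)

lemma (in prob_space) integral_cis_sym_uniform:
  assumes [measurable]: "X \<in> borel_measurable M" and "sym_uniform M X a" and "a \<ge> 0"
  shows "(\<integral>\<omega>. cis (t * X \<omega>) \<partial>M) = sinc (t * a)"
proof -
  have "(\<integral>\<omega>. cis (t * X \<omega>) \<partial>M) = integral\<^sup>L (distr M lborel X) (\<lambda>x. cis (t * x))"
    by (simp add: integral_distr)
  with assms(2,3) show ?thesis
    by (cases "a = 0") (auto simp: sym_uniform_def integral_return integral_uniform_measure_symmetric_cis)
qed

lemma (in prob_space) integral_cis_uniform_phase_int:
  assumes [measurable]: "X \<in> borel_measurable M"
    and "distr M lborel X = uniform_measure lborel {0..2*pi}"
  shows "(\<integral>\<omega>. cis (of_int n * X \<omega>) \<partial>M) = of_bool (n = 0)"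
  using integral_distr[of X M lborel "\<lambda>x. cis (of_int n * x)"] assms
  by (simp add: integral_uniform_measure_period_cis_int)

lemma (in prob_space) integral_cis_indep_phases:
  assumes "finite I" and indep: "indep_vars (\<lambda>_. borel) \<phi> I"
    and "\<And>i. i \<in> I \<Longrightarrow> distr M lborel (\<phi> i) = uniform_measure lborel {0..2*pi}"
  shows "(\<integral>\<omega>. cis (\<Sum>i\<in>I. of_int (n i) * \<phi> i \<omega>) \<partial>M) = of_bool (\<forall>i\<in>I. n i = 0)"
proof -
  have rv: "\<phi> i \<in> borel_measurable M" if "i \<in> I" for i
    using indep that by (simp add: indep_vars_def)
  have "indep_vars (\<lambda>_. borel) (\<lambda>i \<omega>. cis (of_int (n i) * \<phi> i \<omega>)) I"
    by (rule indep_vars_compose2[OF indep]) measurable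
  then have "(\<integral>\<omega>. (\<Prod>i\<in>I. cis (of_int (n i) * \<phi> i \<omega>)) \<partial>M) = (\<Prod>i\<in>I. \<integral>\<omega>. cis (of_int (n i) * \<phi> i \<omega>) \<partial>M)"
    using \<open>finite I\<close> rv
    by (intro indep_vars_lebesgue_integral integrable_const_bound[where B=1]) auto
  with assms rv show ?thesis
    by (simp add: cis_sum integral_cis_uniform_phase_int prod_zero_iff)
qed

lemma (in prob_space) indep_var_integral_mult_bounded:
  fixes f :: "'b \<Rightarrow> 'd::{real_normed_field, banach, second_countable_topology}"
  assumes indep: "indep_var S X T Y"
    and f: "f \<in> borel_measurable S" "\<And>x. norm (f x) \<le> B"
    and g: "g \<in> borel_measurable T" "\<And>y. norm (g y) \<le> C"
  shows "(\<integral>\<omega>. f (X \<omega>) * g (Y \<omega>) \<partial>M) = (\<integral>\<omega>. f (X \<omega>) \<partial>M) * (\<integral>\<omega>. g (Y \<omega>) \<partial>M)"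
    and "integrable M (\<lambda>\<omega>. f (X \<omega>) * g (Y \<omega>))"
proof -
  have ind: "indep_var borel (\<lambda>\<omega>. f (X \<omega>)) borel (\<lambda>\<omega>. g (Y \<omega>))"
    using indep_var_compose[OF indep f(1) g(1)] by (simp add: comp_def)
  have "integrable M (\<lambda>\<omega>. f (X \<omega>))" "integrable M (\<lambda>\<omega>. g (Y \<omega>))"
    using indep_var_rv1[OF ind] indep_var_rv2[OF ind] f(2) g(2)
    by (auto intro: integrable_const_bound)
  with ind show "(\<integral>\<omega>. f (X \<omega>) * g (Y \<omega>) \<partial>M) = (\<integral>\<omega>. f (X \<omega>) \<partial>M) * (\<integral>\<omega>. g (Y \<omega>) \<partial>M)"
    and "integrable M (\<lambda>\<omega>. f (X \<omega>) * g (Y \<omega>))"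
    by (rule indep_var_lebesgue_integral indep_var_integrable)+
qed

lemma (in prob_space) indep_sets_reindex:
  assumes "inj_on f J" and indep: "indep_sets F (f ` J)"
  shows "indep_sets (\<lambda>j. F (f j)) J"
  unfolding indep_sets_def
proof (intro conjI ballI allI impI)
  show "F (f j) \<subseteq> events" if "j \<in> J" for j
    using indep that by (simp add: indep_sets_def)
next
  fix J' A assume J': "J' \<subseteq> J" "J' \<noteq> {}" "finite J'" and A: "A \<in> (\<Pi> j\<in>J'. F (f j))"
  have inj: "inj_on f J'"
    using \<open>inj_on f J\<close> J'(1) by (rule inj_on_subset)
  define A' where "A' i = A (the_inv_into J' f i)" for i
  have A'_f: "A' (f j) = A j" if "j \<in> J'" for j
    using inj that by (simp add: A'_def the_inv_into_f_f)
  have "A' \<in> (\<Pi> i\<in>f ` J'. F i)"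
    using A by (auto simp: A'_f)
  with indep J' have "prob (\<Inter>i\<in>f ` J'. A' i) = (\<Prod>i\<in>f ` J'. prob (A' i))"
    unfolding indep_sets_def by (metis finite_imageI image_is_empty image_mono)
  then show "prob (\<Inter>j\<in>J'. A j) = (\<Prod>j\<in>J'. prob (A j))"
    using inj by (simp add: prod.reindex A'_f cong: INF_cong)
qed

lemma (in prob_space) indep_vars_reindex:
  assumes "inj_on f J" and "indep_vars M' X (f ` J)"
  shows "indep_vars (\<lambda>j. M' (f j)) (\<lambda>j. X (f j)) J"
  using assms indep_sets_reindex[OF assms(1), of "\<lambda>i. {X i -` A \<inter> space M | A. A \<in> sets (M' i)}"]
  by (simp add: indep_vars_def2)

locale uniform_phases = prob_space M for M :: "'a measure" +
  fixes I :: "'i set" and \<phi> :: "'i \<Rightarrow> 'a \<Rightarrow> real" and T :: "('i \<Rightarrow> real) measure" and \<Theta> :: "'a \<Rightarrow> 'i \<Rightarrow> real"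
  assumes finite_phases: "finite I"
    and indep_phases: "indep_vars (\<lambda>_. borel) \<phi> I"
    and phases_uniform: "\<And>i. i \<in> I \<Longrightarrow> distr M lborel (\<phi> i) = uniform_measure lborel {0..2*pi}"
    and indep_phases_\<Theta>: "indep_var (\<Pi>\<^sub>M i\<in>I. borel) (\<lambda>\<omega>. \<lambda>i\<in>I. \<phi> i \<omega>) T \<Theta>"
begin

lemma integral_cis_phases_mult:
  assumes g: "g \<in> borel_measurable T" "\<And>x. norm (g x) \<le> B"
  shows "(\<integral>\<omega>. cis (\<Sum>i\<in>I. of_int (n i) * \<phi> i \<omega>) * g (\<Theta> \<omega>) \<partial>M)
           = of_bool (\<forall>i\<in>I. n i = 0) * (\<integral>\<omega>. g (\<Theta> \<omega>) \<partial>M)"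
    and "integrable M (\<lambda>\<omega>. cis (\<Sum>i\<in>I. of_int (n i) * \<phi> i \<omega>) * g (\<Theta> \<omega>))"
proof -
  define F where "F x = cis (\<Sum>i\<in>I. of_int (n i) * x i)" for x :: "'i \<Rightarrow> real"
  have F: "F \<in> borel_measurable (\<Pi>\<^sub>M i\<in>I. borel)" "\<And>x. norm (F x) \<le> 1"
    unfolding F_def by measurable
  have F_phases: "F (\<lambda>i\<in>I. \<phi> i \<omega>) = cis (\<Sum>i\<in>I. of_int (n i) * \<phi> i \<omega>)" for \<omega>
    unfolding F_def by (auto intro!: sum.cong arg_cong[where f=cis])
  note indep_var_integral_mult_bounded[OF indep_phases_\<Theta> F g]
  then show "(\<integral>\<omega>. cis (\<Sum>i\<in>I. of_int (n i) * \<phi> i \<omega>) * g (\<Theta> \<omega>) \<partial>M)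
           = of_bool (\<forall>i\<in>I. n i = 0) * (\<integral>\<omega>. g (\<Theta> \<omega>) \<partial>M)"
    and "integrable M (\<lambda>\<omega>. cis (\<Sum>i\<in>I. of_int (n i) * \<phi> i \<omega>) * g (\<Theta> \<omega>))"
    unfolding F_phases
    by (simp_all add: integral_cis_indep_phases[OF finite_phases indep_phases phases_uniform])
qed

lemma integral_cis_phase_diffs_mult:
  assumes "a \<in> I" "b \<in> I" "a' \<in> I" "b' \<in> I" "a \<noteq> b"
    and g: "g \<in> borel_measurable T" "\<And>x. norm (g x) \<le> B"
  shows "(\<integral>\<omega>. cis ((\<phi> a \<omega> - \<phi> b \<omega>) - (\<phi> a' \<omega> - \<phi> b' \<omega>)) * g (\<Theta> \<omega>) \<partial>M)
           = of_bool ((a', b') = (a, b)) * (\<integral>\<omega>. g (\<Theta> \<omega>) \<partial>M)"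
    and "integrable M (\<lambda>\<omega>. cis ((\<phi> a \<omega> - \<phi> b \<omega>) - (\<phi> a' \<omega> - \<phi> b' \<omega>)) * g (\<Theta> \<omega>))"
proof -
  define n :: "'i \<Rightarrow> int" where
    "n i = of_bool (i = a) - of_bool (i = b) - of_bool (i = a') + of_bool (i = b')" for i
  have delta: "(\<Sum>i\<in>I. of_bool (i = c) * \<phi> i \<omega>) = \<phi> c \<omega>" if "c \<in> I" for c \<omega>
    using finite_phases that by (simp add: of_bool_def if_distrib[of "\<lambda>x. x * _"] sum.delta' cong: if_cong)
  have "(\<Sum>i\<in>I. of_int (n i) * \<phi> i \<omega>) = (\<phi> a \<omega> - \<phi> b \<omega>) - (\<phi> a' \<omega> - \<phi> b' \<omega>)" for \<omega>
    using assms by (simp add: n_def ring_distribs sum.distrib sum_subtractf delta)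
  moreover have "(\<forall>i\<in>I. n i = 0) \<longleftrightarrow> (a', b') = (a, b)"
  proof
    assume "\<forall>i\<in>I. n i = 0"
    then have "n a = 0" "n b = 0"
      using assms by auto
    with \<open>a \<noteq> b\<close> show "(a', b') = (a, b)"
      by (auto simp: n_def of_bool_def split: if_splits)
  qed (simp add: n_def)
  ultimately show "(\<integral>\<omega>. cis ((\<phi> a \<omega> - \<phi> b \<omega>) - (\<phi> a' \<omega> - \<phi> b' \<omega>)) * g (\<Theta> \<omega>) \<partial>M)
           = of_bool ((a', b') = (a, b)) * (\<integral>\<omega>. g (\<Theta> \<omega>) \<partial>M)"
    and "integrable M (\<lambda>\<omega>. cis ((\<phi> a \<omega> - \<phi> b \<omega>) - (\<phi> a' \<omega> - \<phi> b' \<omega>)) * g (\<Theta> \<omega>))"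
    using integral_cis_phases_mult[OF g, of n] by simp_all
qed

lemma integral_cis_phase_diff_mult:
  assumes "a \<in> I" "b \<in> I" "a \<noteq> b"
    and g: "g \<in> borel_measurable T" "\<And>x. norm (g x) \<le> B"
  shows "(\<integral>\<omega>. cis (\<phi> a \<omega> - \<phi> b \<omega>) * g (\<Theta> \<omega>) \<partial>M) = 0"
    and "integrable M (\<lambda>\<omega>. cis (\<phi> a \<omega> - \<phi> b \<omega>) * g (\<Theta> \<omega>))"
  \<comment> \<open>the case \<open>a' = b' = a\<close> of the previous lemma\<close>
  using integral_cis_phase_diffs_mult[OF assms(1,2,1,1,3) g] assms(3) by simp_all

context
  fixes P :: "'p set" and \<sigma> \<tau> :: "'p \<Rightarrow> 'i" and g :: "'p \<Rightarrow> ('i \<Rightarrow> real) \<Rightarrow> complex"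
    and B :: "'p \<Rightarrow> real"
  assumes finite_pairs: "finite P"
    and phase_pairs: "\<And>p. p \<in> P \<Longrightarrow> \<sigma> p \<in> I \<and> \<tau> p \<in> I \<and> \<sigma> p \<noteq> \<tau> p"
    and g_measurable: "\<And>p. p \<in> P \<Longrightarrow> g p \<in> borel_measurable T"
    and g_bounded: "\<And>p x. p \<in> P \<Longrightarrow> norm (g p x) \<le> B p"
begin

lemma integral_phase_sum:
  "(\<integral>\<omega>. (\<Sum>p\<in>P. cis (\<phi> (\<sigma> p) \<omega> - \<phi> (\<tau> p) \<omega>) * g p (\<Theta> \<omega>)) \<partial>M) = 0"
  using phase_pairs g_measurable g_bounded
  by (subst Bochner_Integration.integral_sum) (auto intro!: sum.neutral integral_cis_phase_diff_mult)

lemma integral_norm_phase_sum_sq: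
  assumes inj: "inj_on (\<lambda>p. (\<sigma> p, \<tau> p)) P"
  shows "(\<integral>\<omega>. (cmod (\<Sum>p\<in>P. cis (\<phi> (\<sigma> p) \<omega> - \<phi> (\<tau> p) \<omega>) * g p (\<Theta> \<omega>)))\<^sup>2 \<partial>M)
           = (\<Sum>p\<in>P. \<integral>\<omega>. (cmod (g p (\<Theta> \<omega>)))\<^sup>2 \<partial>M)"
proof -
  define Z where "Z \<omega> = (\<Sum>p\<in>P. cis (\<phi> (\<sigma> p) \<omega> - \<phi> (\<tau> p) \<omega>) * g p (\<Theta> \<omega>))" for \<omega>
  define \<Delta> where "\<Delta> p q \<omega> = (\<phi> (\<sigma> p) \<omega> - \<phi> (\<tau> p) \<omega>) - (\<phi> (\<sigma> q) \<omega> - \<phi> (\<tau> q) \<omega>)" for p q \<omega>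
  have g_cnj_g: "(\<lambda>x. g p x * cnj (g q x)) \<in> borel_measurable T" "norm (g p x * cnj (g q x)) \<le> B p * B q"
    if "p \<in> P" "q \<in> P" for p q x
  proof -
    show "(\<lambda>x. g p x * cnj (g q x)) \<in> borel_measurable T"
      using g_measurable[OF that(1)] g_measurable[OF that(2)] by measurable
    show "norm (g p x * cnj (g q x)) \<le> B p * B q"
      using mult_mono[OF g_bounded g_bounded order_trans[OF norm_ge_zero g_bounded] norm_ge_zero] that
      by (simp add: norm_mult)
  qed
  have "Z \<omega> * cnj (Z \<omega>) = (\<Sum>p\<in>P. \<Sum>q\<in>P. cis (\<Delta> p q \<omega>) * (g p (\<Theta> \<omega>) * cnj (g q (\<Theta> \<omega>))))" for \<omega>
    unfolding Z_def \<Delta>_def cnj_sum sum_product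
    by (intro sum.cong refl) (simp add: cis_cnj mult_ac cis_mult diff_diff_eq2 add_diff_eq)
  then have "complex_of_real (\<integral>\<omega>. (cmod (Z \<omega>))\<^sup>2 \<partial>M)
      = (\<integral>\<omega>. (\<Sum>p\<in>P. \<Sum>q\<in>P. cis (\<Delta> p q \<omega>) * (g p (\<Theta> \<omega>) * cnj (g q (\<Theta> \<omega>)))) \<partial>M)"
    by (simp only: integral_complex_of_real[symmetric] complex_norm_square)
  also have "\<dots> = (\<Sum>p\<in>P. \<Sum>q\<in>P. \<integral>\<omega>. cis (\<Delta> p q \<omega>) * (g p (\<Theta> \<omega>) * cnj (g q (\<Theta> \<omega>))) \<partial>M)"
    using phase_pairs g_cnj_g unfolding \<Delta>_def
    by (subst Bochner_Integration.integral_sum)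
       (auto intro!: sum.cong Bochner_Integration.integral_sum Bochner_Integration.integrable_sum
          integral_cis_phase_diffs_mult(2))
  also have "\<dots> = (\<Sum>p\<in>P. \<Sum>q\<in>P. of_bool (q = p) * (\<integral>\<omega>. g p (\<Theta> \<omega>) * cnj (g q (\<Theta> \<omega>)) \<partial>M))"
  proof (intro sum.cong refl)
    fix p q assume pq: "p \<in> P" "q \<in> P"
    show "(\<integral>\<omega>. cis (\<Delta> p q \<omega>) * (g p (\<Theta> \<omega>) * cnj (g q (\<Theta> \<omega>))) \<partial>M)
        = of_bool (q = p) * (\<integral>\<omega>. g p (\<Theta> \<omega>) * cnj (g q (\<Theta> \<omega>)) \<partial>M)"
      using integral_cis_phase_diffs_mult(1)[of "\<sigma> p" "\<tau> p" "\<sigma> q" "\<tau> q" "\<lambda>x. g p x * cnj (g q x)" "B p * B q"]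
        phase_pairs[OF pq(1)] phase_pairs[OF pq(2)] g_cnj_g[OF pq] inj_on_eq_iff[OF inj pq(2,1)]
      unfolding \<Delta>_def by simp
  qed
  also have "\<dots> = (\<Sum>p\<in>P. \<integral>\<omega>. g p (\<Theta> \<omega>) * cnj (g p (\<Theta> \<omega>)) \<partial>M)"
    using finite_pairs by (simp add: of_bool_def if_distrib[of "\<lambda>x. x * _"] sum.delta cong: if_cong)
  also have "\<dots> = complex_of_real (\<Sum>p\<in>P. \<integral>\<omega>. (cmod (g p (\<Theta> \<omega>)))\<^sup>2 \<partial>M)"
    by (simp only: integral_complex_of_real[symmetric] complex_norm_square of_real_sum)
  finally show ?thesis
    unfolding Z_def by (simp only: of_real_eq_iff)
qed

lemma cvar_phase_sum:
  assumes "inj_on (\<lambda>p. (\<sigma> p, \<tau> p)) P"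
  shows "cvar M (\<lambda>\<omega>. \<Sum>p\<in>P. cis (\<phi> (\<sigma> p) \<omega> - \<phi> (\<tau> p) \<omega>) * g p (\<Theta> \<omega>))
           = (\<Sum>p\<in>P. \<integral>\<omega>. (cmod (g p (\<Theta> \<omega>)))\<^sup>2 \<partial>M)"
  unfolding cvar_def integral_phase_sum integral_norm_phase_sum_sq[OF assms] by simp

end

lemma cvar_cross_phase_sum:
  fixes a :: "'l \<Rightarrow> 'i" and a' :: "'m \<Rightarrow> 'i" and c :: "'l \<Rightarrow> 'm \<Rightarrow> real"
    and g :: "'l \<Rightarrow> 'm \<Rightarrow> ('i \<Rightarrow> real) \<Rightarrow> complex"
  assumes "finite A" "finite A'" "a ` A \<subseteq> I" "a' ` A' \<subseteq> I" "inj_on a A" "inj_on a' A'"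
    and "a ` A \<inter> a' ` A' = {}"
    and g: "\<And>l l'. l \<in> A \<Longrightarrow> l' \<in> A' \<Longrightarrow> g l l' \<in> borel_measurable T"
      "\<And>l l' x. l \<in> A \<Longrightarrow> l' \<in> A' \<Longrightarrow> norm (g l l' x) \<le> B"
  shows "cvar M (\<lambda>\<omega>. \<Sum>l\<in>A. \<Sum>l'\<in>A'. c l l' * cis (\<phi> (a' l') \<omega> - \<phi> (a l) \<omega>) * g l l' (\<Theta> \<omega>))
       = (\<Sum>l\<in>A. \<Sum>l'\<in>A'. (c l l')\<^sup>2 * (\<integral>\<omega>. (cmod (g l l' (\<Theta> \<omega>)))\<^sup>2 \<partial>M))"
proof -
  have "cvar M (\<lambda>\<omega>. \<Sum>p\<in>A \<times> A'. cis (\<phi> (a' (snd p)) \<omega> - \<phi> (a (fst p)) \<omega>)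
                                    * (c (fst p) (snd p) * g (fst p) (snd p) (\<Theta> \<omega>)))
      = (\<Sum>p\<in>A \<times> A'. \<integral>\<omega>. (cmod (c (fst p) (snd p) * g (fst p) (snd p) (\<Theta> \<omega>)))\<^sup>2 \<partial>M)"
  proof (rule cvar_phase_sum)
    show "norm (c (fst p) (snd p) * g (fst p) (snd p) x) \<le> \<bar>c (fst p) (snd p)\<bar> * B" if "p \<in> A \<times> A'" for p x
      using that g(2) by (auto simp: norm_mult intro: mult_left_mono)
    show "inj_on (\<lambda>p. (a' (snd p), a (fst p))) (A \<times> A')"
      using assms(5,6) by (auto simp: inj_on_def)
    show "a' (snd p) \<in> I \<and> a (fst p) \<in> I \<and> a' (snd p) \<noteq> a (fst p)" if "p \<in> A \<times> A'" for p
      using that assms(3,4,7) by (auto simp: image_subset_iff) blast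
    show "(\<lambda>x. c (fst p) (snd p) * g (fst p) (snd p) x) \<in> borel_measurable T" if "p \<in> A \<times> A'" for p
      using that g(1)[of "fst p" "snd p"] by (auto simp: mem_Times_iff)
  qed (simp add: \<open>finite A\<close> \<open>finite A'\<close>)
  then show ?thesis
    by (simp add: sum.cartesian_product norm_mult power_mult_distrib mult_ac case_prod_beta)
qed

end

text \<open>\<^const>\<open>prob_space.indep_var\<close> requires both random elements to take values of the same type, so
  the phase vector is indexed by \<open>{True} \<times> I\<close> to match the angle vector indexed by \<open>UNIV \<times> I\<close>.\<close>

lemma (in prob_space) uniform_phases_tagged:
  fixes \<phi> :: "'i \<Rightarrow> 'a \<Rightarrow> real" and \<Theta> :: "'a \<Rightarrow> bool \<times> 'i \<Rightarrow> real"
  assumes "finite I" and indep: "indep_vars (\<lambda>_. borel) \<phi> I"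
    and "\<And>i. i \<in> I \<Longrightarrow> distr M lborel (\<phi> i) = uniform_measure lborel {0..2*pi}"
    and "indep_var (\<Pi>\<^sub>M j\<in>{True} \<times> I. borel) (\<lambda>\<omega>. \<lambda>j\<in>{True} \<times> I. \<phi> (snd j) \<omega>) T \<Theta>"
  shows "uniform_phases M ({True} \<times> I) (\<lambda>j. \<phi> (snd j)) T \<Theta>"
proof
  show "indep_vars (\<lambda>_. borel) (\<lambda>j. \<phi> (snd j)) ({True} \<times> I)"
    using indep_vars_reindex[of snd "{True} \<times> I"] indep by (simp add: inj_on_def)
qed (use assms in auto)

definition array_factor :: "nat \<Rightarrow> real \<Rightarrow> real \<Rightarrow> complex" where
  "array_factor N c u = (\<Sum>m<N. cis (- (2 * pi * c * real m * u)))"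

lemma borel_measurable_array_factor [measurable]: "array_factor N c \<in> borel_measurable borel"
  unfolding array_factor_def by measurable

lemma norm_array_factor_le: "norm (array_factor N c u) \<le> N"
  unfolding array_factor_def by (rule order_trans[OF norm_sum]) simp

lemma steer_inner_product:
  "(\<Sum>m\<in>{..<Mx} \<times> {..<My}. cnj (steer lam dx dy tx ty m) * steer lam dx dy tx' ty' m)
     = array_factor Mx (dx / lam) (sin tx - sin tx') * array_factor My (dy / lam) (sin ty - sin ty')"
  unfolding array_factor_def sum_product sum.cartesian_product
proof (intro sum.cong refl, clarify)
  fix mx my
  show "cnj (steer lam dx dy tx ty (mx, my)) * steer lam dx dy tx' ty' (mx, my)
      = cis (- (2 * pi * (dx / lam) * real mx * (sin tx - sin tx')))
        * cis (- (2 * pi * (dy / lam) * real my * (sin ty - sin ty')))"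
    unfolding steer_def cis_conv_exp[symmetric] cis_cnj cis_mult
    by (simp add: divide_inverse algebra_simps)
qed

lemma norm_array_factor_sq:
  "complex_of_real ((cmod (array_factor N c u))\<^sup>2)
     = (\<Sum>m1<N. \<Sum>m2<N. cis (2 * pi * c * (real m1 - real m2) * u))"
proof -
  have "complex_of_real ((cmod (array_factor N c u))\<^sup>2) = cnj (array_factor N c u) * array_factor N c u"
    by (simp only: complex_norm_square mult.commute)
  then show ?thesis
    unfolding array_factor_def cnj_sum sum_product
    by (simp add: cis_cnj cis_mult algebra_simps)
qed

lemma (in prob_space) integral_norm_array_factor_sq:
  assumes [measurable]: "U \<in> borel_measurable M" and "sym_uniform M U a" "a \<ge> 0"
  shows "(\<integral>\<omega>. (cmod (array_factor N c (U \<omega>)))\<^sup>2 \<partial>M) = (real N)\<^sup>2 * eta (c * a) N"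
proof -
  have "complex_of_real (\<integral>\<omega>. (cmod (array_factor N c (U \<omega>)))\<^sup>2 \<partial>M)
      = (\<integral>\<omega>. (\<Sum>m1<N. \<Sum>m2<N. cis (2 * pi * c * (real m1 - real m2) * U \<omega>)) \<partial>M)"
    by (simp only: integral_complex_of_real[symmetric] norm_array_factor_sq)
  also have "\<dots> = (\<Sum>m1<N. \<Sum>m2<N. \<integral>\<omega>. cis (2 * pi * c * (real m1 - real m2) * U \<omega>) \<partial>M)"
    by (simp add: Bochner_Integration.integral_sum Bochner_Integration.integrable_sum
        integrable_const_bound[where B=1])
  also have "\<dots> = (\<Sum>m1<N. \<Sum>m2<N. complex_of_real (sinc (2 * pi * c * (real m1 - real m2) * a)))"
    using assms by (intro sum.cong refl) (rule integral_cis_sym_uniform)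
  also have "\<dots> = complex_of_real (\<Sum>m1<N. \<Sum>m2<N. sinc (2 * pi * (c * a) * (real m1 - real m2)))"
  proof -
    have "2 * pi * c * (real m1 - real m2) * a = 2 * pi * (c * a) * (real m1 - real m2)" for m1 m2 :: nat
      by (simp only: ac_simps)
    then show ?thesis
      by (simp only: of_real_sum)
  qed
  also have "\<dots> = complex_of_real ((real N)\<^sup>2 * eta (c * a) N)"
    unfolding eta_def by (cases "N = 0") simp_all
  finally show ?thesis
    by (simp only: of_real_eq_iff)
qed

lemma (in prob_space) integral_norm_planar_array_factor_sq:
  assumes indep: "indep_var borel U borel V"
    and "sym_uniform M U a" "sym_uniform M V b" "a \<ge> 0" "b \<ge> 0"
  shows "(\<integral>\<omega>. (cmod (array_factor Mx cx (U \<omega>) * array_factor My cy (V \<omega>)))\<^sup>2 \<partial>M)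
       = (real Mx)\<^sup>2 * eta (cx * a) Mx * ((real My)\<^sup>2 * eta (cy * b) My)"
proof -
  have bound: "norm ((cmod (array_factor N c u))\<^sup>2) \<le> (real N)\<^sup>2" for N c u
    using power_mono[OF norm_array_factor_le[of N c u] norm_ge_zero, of 2] by simp
  have "(\<integral>\<omega>. (cmod (array_factor Mx cx (U \<omega>) * array_factor My cy (V \<omega>)))\<^sup>2 \<partial>M)
      = (\<integral>\<omega>. (cmod (array_factor Mx cx (U \<omega>)))\<^sup>2 * (cmod (array_factor My cy (V \<omega>)))\<^sup>2 \<partial>M)"
    by (simp add: norm_mult power_mult_distrib)
  also have "\<dots> = (\<integral>\<omega>. (cmod (array_factor Mx cx (U \<omega>)))\<^sup>2 \<partial>M) * (\<integral>\<omega>. (cmod (array_factor My cy (V \<omega>)))\<^sup>2 \<partial>M)"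
    by (rule indep_var_integral_mult_bounded(1)[OF indep _ bound _ bound]) measurable
  finally show ?thesis
    using assms indep_var_rv1[OF indep] indep_var_rv2[OF indep]
    by (simp add: integral_norm_array_factor_sq)
qed

text \<open>\<open>x (True, i)\<close> and \<open>x (False, i)\<close> are the horizontal and vertical angles of path \<open>i\<close>.\<close>

definition angle_array_factor ::
    "nat \<Rightarrow> nat \<Rightarrow> real \<Rightarrow> real \<Rightarrow> 'i \<Rightarrow> 'i \<Rightarrow> (bool \<times> 'i \<Rightarrow> real) \<Rightarrow> complex" where
  "angle_array_factor Mx My cx cy i i' x =
     array_factor Mx cx (sin (x (True, i)) - sin (x (True, i')))
     * array_factor My cy (sin (x (False, i)) - sin (x (False, i')))"

lemma borel_measurable_angle_array_factor:
  assumes "i \<in> I" "i' \<in> I"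
  shows "angle_array_factor Mx My cx cy i i' \<in> borel_measurable (\<Pi>\<^sub>M j\<in>UNIV \<times> I. borel)"
proof -
  note [simp] = assms
  show ?thesis
    unfolding angle_array_factor_def by measurable
qed

lemma norm_angle_array_factor_le: "norm (angle_array_factor Mx My cx cy i i' x) \<le> real Mx * real My"
  unfolding angle_array_factor_def norm_mult by (intro mult_mono norm_array_factor_le) auto

lemma channel_inner_product:
  "(\<Sum>m\<in>{..<Mx} \<times> {..<My}.
      cnj (\<Sum>l\<in>A. complex_of_real (b l) * exp (\<i> * complex_of_real (p l)) * steer lam dx dy (tx l) (ty l) m)
      * (\<Sum>l'\<in>A'. complex_of_real (b' l') * exp (\<i> * complex_of_real (p' l')) * steer lam dx dy (tx' l') (ty' l') m))
   = (\<Sum>l\<in>A. \<Sum>l'\<in>A'. complex_of_real (b l * b' l') * cis (p' l' - p l)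
        * (array_factor Mx (dx / lam) (sin (tx l) - sin (tx' l'))
           * array_factor My (dy / lam) (sin (ty l) - sin (ty' l'))))"
proof -
  have phase: "cis (a' - a) = cnj (exp (\<i> * complex_of_real a)) * exp (\<i> * complex_of_real a')" for a a'
    by (simp add: cis_conv_exp[symmetric] cis_cnj cis_mult)
  have "(\<Sum>m\<in>{..<Mx} \<times> {..<My}.
      cnj (\<Sum>l\<in>A. complex_of_real (b l) * exp (\<i> * complex_of_real (p l)) * steer lam dx dy (tx l) (ty l) m)
      * (\<Sum>l'\<in>A'. complex_of_real (b' l') * exp (\<i> * complex_of_real (p' l')) * steer lam dx dy (tx' l') (ty' l') m))
    = (\<Sum>m\<in>{..<Mx} \<times> {..<My}. \<Sum>l\<in>A. \<Sum>l'\<in>A'. complex_of_real (b l * b' l') * cis (p' l' - p l)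
        * (cnj (steer lam dx dy (tx l) (ty l) m) * steer lam dx dy (tx' l') (ty' l') m))"
    unfolding cnj_sum sum_product phase by (intro sum.cong refl) (simp add: mult_ac)
  also have "\<dots> = (\<Sum>l\<in>A. \<Sum>l'\<in>A'. complex_of_real (b l * b' l') * cis (p' l' - p l)
        * (\<Sum>m\<in>{..<Mx} \<times> {..<My}. cnj (steer lam dx dy (tx l) (ty l) m) * steer lam dx dy (tx' l') (ty' l') m))"
    unfolding sum_distrib_left by (subst sum.swap, intro sum.cong refl, subst sum.swap) (rule refl)
  finally show ?thesis
    by (simp only: steer_inner_product)
qed

theorem proposition1:
  fixes M :: "'a measure"
    and K L Mx My k k' :: nat
    and lam dx dy :: real
    and \<beta> :: "nat \<Rightarrow> nat \<Rightarrow> real"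
    and \<phi> \<theta>x \<theta>y :: "nat \<Rightarrow> nat \<Rightarrow> 'a \<Rightarrow> real"
    and \<alpha>x \<alpha>y :: "nat \<Rightarrow> nat \<Rightarrow> real"
  defines "I \<equiv> {..<K} \<times> {1..L}"
    and "h \<equiv> (\<lambda>u \<omega> m. \<Sum>l\<in>{1..L}. complex_of_real (\<beta> u l) * exp (\<i> * complex_of_real (\<phi> u l \<omega>))
                 * steer lam dx dy (\<theta>x u l \<omega>) (\<theta>y u l \<omega>) m)"
  assumes "prob_space M"
    and "K \<ge> 2" and "k < K" and "k' < K" and "k \<noteq> k'"
    and "Mx > 0" and "My > 0" and "lam > 0" and "dx > 0" and "dy > 0"
    and angles_rv: "\<And>u l. (u, l) \<in> I \<Longrightarrow> \<theta>x u l \<in> borel_measurable M \<and> \<theta>y u l \<in> borel_measurable M"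
    and phases_indep: "prob_space.indep_vars M (\<lambda>_. borel) (\<lambda>i. \<phi> (fst i) (snd i)) I"
    and phases_unif: "\<And>u l. (u, l) \<in> I \<Longrightarrow> distr M lborel (\<phi> u l) = uniform_measure lborel {0..2 * pi}"
    and phases_angles_indep:
      "prob_space.indep_var M
         (PiM ({True} \<times> I) (\<lambda>_. borel))
         (\<lambda>\<omega>. \<lambda>j\<in>{True} \<times> I. \<phi> (fst (snd j)) (snd (snd j)) \<omega>)
         (PiM (UNIV \<times> I) (\<lambda>_. borel))
         (\<lambda>\<omega>. \<lambda>j\<in>UNIV \<times> I. if fst j then \<theta>x (fst (snd j)) (snd (snd j)) \<omega>
                                   else \<theta>y (fst (snd j)) (snd (snd j)) \<omega>)"
    and diff_x: "\<And>l l'. l \<in> {1..L} \<Longrightarrow> l' \<in> {1..L} \<Longrightarrow>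
       sym_uniform M (\<lambda>\<omega>. sin (\<theta>x k l \<omega>) - sin (\<theta>x k' l' \<omega>)) (\<alpha>x l l')"
    and diff_y: "\<And>l l'. l \<in> {1..L} \<Longrightarrow> l' \<in> {1..L} \<Longrightarrow>
       sym_uniform M (\<lambda>\<omega>. sin (\<theta>y k l \<omega>) - sin (\<theta>y k' l' \<omega>)) (\<alpha>y l l')"
    and diff_indep: "\<And>l l'. l \<in> {1..L} \<Longrightarrow> l' \<in> {1..L} \<Longrightarrow>
       prob_space.indep_var M
         borel (\<lambda>\<omega>. sin (\<theta>x k l \<omega>) - sin (\<theta>x k' l' \<omega>))
         borel (\<lambda>\<omega>. sin (\<theta>y k l \<omega>) - sin (\<theta>y k' l' \<omega>))"
    and alpha_range: "\<And>l l'. l \<in> {1..L} \<Longrightarrow> l' \<in> {1..L} \<Longrightarrow>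
       \<alpha>x l l' \<in> {0..1} \<and> \<alpha>y l l' \<in> {0..1}"
  shows "cvar M (\<lambda>\<omega>. (1 / of_nat (Mx * My)) *
            (\<Sum>m\<in>{..<Mx} \<times> {..<My}. cnj (h k \<omega> m) * h k' \<omega> m))
         = (\<Sum>l\<in>{1..L}. \<Sum>l'\<in>{1..L}. (\<beta> k l * \<beta> k' l')\<^sup>2
              * eta (dx * \<alpha>x l l' / lam) Mx * eta (dy * \<alpha>y l l' / lam) My)"
proof -
  interpret prob_space M by fact
  define \<Theta> where "\<Theta> \<omega> = (\<lambda>j\<in>UNIV \<times> I. if fst j then \<theta>x (fst (snd j)) (snd (snd j)) \<omega>
                                   else \<theta>y (fst (snd j)) (snd (snd j)) \<omega>)" for \<omega>
  have kI: "(k, l) \<in> I" "(k', l) \<in> I" if "l \<in> {1..L}" for l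
    using that \<open>k < K\<close> \<open>k' < K\<close> by (auto simp: I_def)
  interpret uniform_phases M "{True} \<times> I" "\<lambda>j. \<phi> (fst (snd j)) (snd (snd j))" "\<Pi>\<^sub>M j\<in>UNIV \<times> I. borel" \<Theta>
    using uniform_phases_tagged[of I "\<lambda>i. \<phi> (fst i) (snd i)"] phases_indep phases_unif phases_angles_indep
    by (simp add: I_def \<Theta>_def[abs_def])
  define c where "c l l' = \<beta> k l * \<beta> k' l' / real (Mx * My)" for l l'
  define g where "g l l' = angle_array_factor Mx My (dx / lam) (dy / lam) (k, l) (k', l')" for l l' :: nat
  have channel: "(1 / of_nat (Mx * My)) * (\<Sum>m\<in>{..<Mx} \<times> {..<My}. cnj (h k \<omega> m) * h k' \<omega> m)
      = (\<Sum>l\<in>{1..L}. \<Sum>l'\<in>{1..L}. c l l' * cis (\<phi> k' l' \<omega> - \<phi> k l \<omega>) * g l l' (\<Theta> \<omega>))" for \<omega>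
    unfolding h_def channel_inner_product
    by (simp add: sum_distrib_left c_def g_def angle_array_factor_def \<Theta>_def kI mult_ac)
  have cvar_sum: "cvar M (\<lambda>\<omega>. \<Sum>l\<in>{1..L}. \<Sum>l'\<in>{1..L}. c l l' * cis (\<phi> k' l' \<omega> - \<phi> k l \<omega>) * g l l' (\<Theta> \<omega>))
      = (\<Sum>l\<in>{1..L}. \<Sum>l'\<in>{1..L}. (c l l')\<^sup>2 * (\<integral>\<omega>. (cmod (g l l' (\<Theta> \<omega>)))\<^sup>2 \<partial>M))"
    using kI \<open>k \<noteq> k'\<close>
    by (intro cvar_cross_phase_sum[where a="\<lambda>l. (True, k, l)" and a'="\<lambda>l. (True, k', l)"
          and B="real Mx * real My", unfolded fst_conv snd_conv])
       (auto simp: g_def inj_on_def borel_measurable_angle_array_factor norm_angle_array_factor_le)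
  have "(c l l')\<^sup>2 * (\<integral>\<omega>. (cmod (g l l' (\<Theta> \<omega>)))\<^sup>2 \<partial>M)
      = (\<beta> k l * \<beta> k' l')\<^sup>2 * eta (dx * \<alpha>x l l' / lam) Mx * eta (dy * \<alpha>y l l' / lam) My"
    if "l \<in> {1..L}" "l' \<in> {1..L}" for l l'
    using integral_norm_planar_array_factor_sq[OF diff_indep[OF that] diff_x[OF that] diff_y[OF that]]
      alpha_range[OF that] kI that \<open>Mx > 0\<close> \<open>My > 0\<close>
    by (simp add: c_def g_def angle_array_factor_def \<Theta>_def power2_eq_square field_simps)
  then show ?thesis
    unfolding channel cvar_sum by (intro sum.cong refl) auto
qed

end
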